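(* Let $(\mathcal{M},\mathrm{dist})$ be a metric space, $\mathcal{F}\subset2^{\mathcal{M}}$, and $J_\beta:\mathcal{M}\to\mathbb{R}\cup\{+\infty\}$, $0<\beta<+\infty$, lower semi-continuous with $J_{\beta_1}\le J_{\beta_2}$ whenever $\beta_1\le\beta_2$; let $J_\infty=\sup_{\beta>0}J_\beta$ and $c_\beta=\inf_{A\in\mathcal{F}}\sup_AJ_\beta\in\mathbb{R}$ for all $0<\beta\le+\infty$. Assume (F1) every $A\in\mathcal{F}$ is closed, and (F2') for every $(A_n)\subset\mathcal{F}$ such that, for some $\beta$, $A_n\subset\mathcal{M}^{c_\infty+1}_\beta$ for all $n$, $\limsup_nA_n\in\mathcal{F}$. For every $0<\beta\le+\infty$ let $\eta_\beta:\mathcal{M}^{c_\infty+1}_\beta\to\mathcal{M}^{c_\infty+1}_\beta$ satisfy $(\eta1)_\beta$: $\eta_\beta(A)\in\mathcal{F}$ whenever $A\in\mathcal{F}$, $A\subset\mathcal{M}^{c_\infty+1}_\beta$; and $(\eta2)_\beta$: $J_\beta(\eta_\beta(x))\le J_\beta(x)$ for all $x\in\mathcal{M}^{c_\infty+1}_\beta$; and suppose $(J_\beta,\eta_\beta)$ satisfies $(PS)_{c_\beta}$. Then, for every $0<\beta\le+\infty$, every optimal set for $J_\beta$ at $c_\beta$ intersects $\mathcal{K}_\beta$; in particular $\mathcal{K}_\beta\neq\emptyset$.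
   Context: $\mathcal{M}^{c'}_\beta=\{x\in\mathcal{M}:J_\beta(x)\le c'\}$. A set $A$ is optimal for $J$ at $c$ if $A\in\mathcal{F}$ and $\sup_AJ=c$. $\limsup_nA_n$ is the set of limits of sequences $x_{n_j}\in A_{n_j}$, $n_j\to\infty$. $\mathcal{K}_\beta=\{x\in\mathcal{M}:J_\beta(x)=J_\beta(\eta_\beta(x))=c_\beta\}$. $(J_\beta,\eta_\beta)$ satisfies $(PS)_{c_\beta}$ if every sequence $(x_n)\subset\mathcal{M}$ with $J_\beta(x_n)\to c_\beta$ and $J_\beta(\eta_\beta(x_n))\to c_\beta$ has a subsequence converging to some $\bar x\in\mathcal{K}_\beta$. *)

theory Defs
  imports "HOL-Analysis.Analysis"
begin

definition lsc :: "('a::metric_space \<Rightarrow> ereal) \<Rightarrow> bool" where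
  "lsc f \<longleftrightarrow> (\<forall>x. f x \<le> Liminf (at x) f)"

text \<open>The family J_beta for 0 < beta <= +infinity, where J_infinity = sup over finite beta.
  The parameter beta is an extended real; only 0 < beta is meaningful.\<close>
definition Jb :: "(real \<Rightarrow> 'a \<Rightarrow> ereal) \<Rightarrow> ereal \<Rightarrow> 'a \<Rightarrow> ereal" where
  "Jb J \<beta> x = (if \<beta> = \<infinity> then (SUP b\<in>{0<..}. J b x) else J (real_of_ereal \<beta>) x)"

definition cval :: "(real \<Rightarrow> 'a \<Rightarrow> ereal) \<Rightarrow> 'a set set \<Rightarrow> ereal \<Rightarrow> ereal" where
  "cval J F \<beta> = (INF A\<in>F. SUP x\<in>A. Jb J \<beta> x)"

definition sublevel :: "(real \<Rightarrow> 'a \<Rightarrow> ereal) \<Rightarrow> ereal \<Rightarrow> ereal \<Rightarrow> 'a set" where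
  "sublevel J \<beta> c' = {x. Jb J \<beta> x \<le> c'}"

text \<open>Kuratowski upper limit: limits of x_{n_j} in A_{n_j}, n_j \<rightarrow> \<infinity>.\<close>
definition limsup_sets :: "(nat \<Rightarrow> 'a::metric_space set) \<Rightarrow> 'a set" where
  "limsup_sets A = {x. \<exists>r xs. strict_mono r \<and> (\<forall>j. xs j \<in> A (r j)) \<and> xs \<longlonglongrightarrow> x}"

definition optimal :: "(real \<Rightarrow> 'a \<Rightarrow> ereal) \<Rightarrow> 'a set set \<Rightarrow> ereal \<Rightarrow> ereal \<Rightarrow> 'a set \<Rightarrow> bool" where
  "optimal J F \<beta> c A \<longleftrightarrow> A \<in> F \<and> (SUP x\<in>A. Jb J \<beta> x) = c"

definition Kset :: "(real \<Rightarrow> 'a \<Rightarrow> ereal) \<Rightarrow> 'a set set \<Rightarrow> (ereal \<Rightarrow> 'a \<Rightarrow> 'a) \<Rightarrow> ereal \<Rightarrow> 'a set" where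
  "Kset J F \<eta> \<beta> = {x. Jb J \<beta> x = cval J F \<beta> \<and> Jb J \<beta> (\<eta> \<beta> x) = cval J F \<beta>}"

text \<open>Palais-Smale condition (PS)_{c_beta} for (J_beta, eta_beta). Sequences are taken in the
  domain of eta_beta, i.e. the sublevel set M^{c_infty+1}_beta.\<close>
definition PS :: "(real \<Rightarrow> 'a::metric_space \<Rightarrow> ereal) \<Rightarrow> 'a set set \<Rightarrow> (ereal \<Rightarrow> 'a \<Rightarrow> 'a) \<Rightarrow> ereal \<Rightarrow> bool" where
  "PS J F \<eta> \<beta> \<longleftrightarrow>
     (\<forall>xs::nat \<Rightarrow> 'a. (\<forall>n. xs n \<in> sublevel J \<beta> (cval J F \<infinity> + 1)) \<and>
        (\<lambda>n. Jb J \<beta> (xs n)) \<longlonglongrightarrow> cval J F \<beta> \<and>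
        (\<lambda>n. Jb J \<beta> (\<eta> \<beta> (xs n))) \<longlonglongrightarrow> cval J F \<beta> \<longrightarrow>
        (\<exists>r xbar. strict_mono r \<and> (xs \<circ> r) \<longlonglongrightarrow> xbar \<and> xbar \<in> Kset J F \<eta> \<beta>))"

end

theory Submission
  imports Defs
begin

text \<open>Take sets \<open>A\<^sub>n \<in> F\<close> whose maxima of \<open>J\<^sub>\<beta>\<close> tend to \<open>c\<^sub>\<beta>\<close>: an optimal set repeated, or a
  minimizing sequence for the minimax value. Since \<open>\<eta>\<^sub>\<beta>(A\<^sub>n) \<in> F\<close>, the maximum of \<open>J\<^sub>\<beta>\<close> on
  \<open>\<eta>\<^sub>\<beta>(A\<^sub>n)\<close> is still at least \<open>c\<^sub>\<beta>\<close>, so some \<open>x\<^sub>n \<in> A\<^sub>n\<close> has \<open>J\<^sub>\<beta>(\<eta>\<^sub>\<beta>(x\<^sub>n))\<close> close to \<open>c\<^sub>\<beta>\<close>; as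
  \<open>\<eta>\<^sub>\<beta>\<close> does not increase \<open>J\<^sub>\<beta>\<close>, also \<open>J\<^sub>\<beta>(x\<^sub>n) \<rightarrow> c\<^sub>\<beta>\<close>. The Palais-Smale condition gives a
  subsequence converging to a point of \<open>K\<^sub>\<beta>\<close>, which lies in the optimal set when that set is
  closed.\<close>

lemma exists_sequence_tendsto_from_deformation:
  fixes f :: "'a \<Rightarrow> ereal" and e :: "'a \<Rightarrow> 'a" and c :: real
  assumes \<delta>: "\<delta> \<longlonglongrightarrow> 0"
    and lower: "\<And>n. ereal c \<le> (SUP y\<in>e ` A n. f y)"
    and decreasing: "\<And>n x. x \<in> A n \<Longrightarrow> f (e x) \<le> f x"
    and upper: "\<And>n x. x \<in> A n \<Longrightarrow> f x \<le> ereal (c + \<delta> n)"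
  shows "\<exists>xs. (\<forall>n. xs n \<in> A n) \<and> (\<lambda>n. f (xs n)) \<longlonglongrightarrow> ereal c
             \<and> (\<lambda>n. f (e (xs n))) \<longlonglongrightarrow> ereal c"
proof -
  have "\<exists>x\<in>A n. ereal (c - inverse (real (Suc n))) < f (e x)" for n
  proof -
    have "ereal (c - inverse (real (Suc n))) < (SUP y\<in>e ` A n. f y)"
      using lower[of n] less_le_trans[of _ "ereal c"] by simp
    then show ?thesis by (simp add: less_SUP_iff)
  qed
  then obtain xs where xs_in: "\<And>n. xs n \<in> A n"
    and xs_low: "\<And>n. ereal (c - inverse (real (Suc n))) < f (e (xs n))"
    by metis
  from tendsto_ereal[OF tendsto_diff[OF tendsto_const LIMSEQ_inverse_real_of_nat, of c]]
  have lim_low: "(\<lambda>n. ereal (c - inverse (real (Suc n)))) \<longlonglongrightarrow> ereal c"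
    by simp
  have lim_up: "(\<lambda>n. ereal (c + \<delta> n)) \<longlonglongrightarrow> ereal c"
    using tendsto_ereal[OF tendsto_add[OF tendsto_const \<delta>, of c]] by simp
  have "ereal (c - inverse (real (Suc n))) \<le> f (e (xs n))" "f (e (xs n)) \<le> f (xs n)"
    "f (xs n) \<le> ereal (c + \<delta> n)" for n
    using xs_low[of n] decreasing[OF xs_in] upper[OF xs_in] by auto
  then have bounds: "ereal (c - inverse (real (Suc n))) \<le> f (xs n)" "f (xs n) \<le> ereal (c + \<delta> n)"
    "ereal (c - inverse (real (Suc n))) \<le> f (e (xs n))" "f (e (xs n)) \<le> ereal (c + \<delta> n)" for n
    by (blast intro: order_trans)+
  have "(\<lambda>n. f (xs n)) \<longlonglongrightarrow> ereal c"
    by (rule tendsto_sandwich[OF _ _ lim_low lim_up]) (intro always_eventually allI bounds)+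
  moreover have "(\<lambda>n. f (e (xs n))) \<longlonglongrightarrow> ereal c"
    by (rule tendsto_sandwich[OF _ _ lim_low lim_up]) (intro always_eventually allI bounds)+
  ultimately show ?thesis
    using xs_in by blast
qed

lemma subset_sublevel_iff: "A \<subseteq> sublevel J \<beta> d \<longleftrightarrow> (SUP x\<in>A. Jb J \<beta> x) \<le> d"
  by (auto simp: sublevel_def SUP_le_iff)

lemma cval_le_SUP: "A \<in> F \<Longrightarrow> cval J F \<beta> \<le> (SUP x\<in>A. Jb J \<beta> x)"
  unfolding cval_def by (rule INF_lower)

lemma Jb_le_Jb_infinity:
  assumes "0 < \<beta>"
  shows "Jb J \<beta> x \<le> Jb J \<infinity> x"
proof (cases "\<beta> = \<infinity>")
  case False
  with assms obtain b where "\<beta> = ereal b" "0 < b"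
    by (cases \<beta>) auto
  then show ?thesis
    unfolding Jb_def by (auto intro!: SUP_upper)
qed simp

lemma cval_le_cval_infinity: "0 < \<beta> \<Longrightarrow> cval J F \<beta> \<le> cval J F \<infinity>"
  unfolding cval_def by (intro INF_mono' SUP_mono' Jb_le_Jb_infinity)

context
  fixes J :: "real \<Rightarrow> 'a::metric_space \<Rightarrow> ereal" and F :: "'a set set"
    and \<eta> :: "ereal \<Rightarrow> 'a \<Rightarrow> 'a" and \<beta> :: ereal and c :: real
  assumes c: "cval J F \<beta> = ereal c"
    and c_le: "cval J F \<beta> \<le> cval J F \<infinity>"
    and eta1: "\<And>B. B \<in> F \<Longrightarrow> B \<subseteq> sublevel J \<beta> (cval J F \<infinity> + 1) \<Longrightarrow> \<eta> \<beta> ` B \<in> F"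
    and eta2: "\<And>x. x \<in> sublevel J \<beta> (cval J F \<infinity> + 1) \<Longrightarrow> Jb J \<beta> (\<eta> \<beta> x) \<le> Jb J \<beta> x"
    and PS: "PS J F \<eta> \<beta>"
begin

lemma Kset_point_from_minimax_sequence:
  assumes A_in: "\<And>n. A n \<in> F"
    and A_max: "\<And>n. (SUP x\<in>A n. Jb J \<beta> x) \<le> ereal (c + \<delta> n)"
    and \<delta>: "\<delta> \<longlonglongrightarrow> 0" "\<And>n. \<delta> n \<le> 1"
  shows "\<exists>xs r xbar. (\<forall>n. xs n \<in> A n) \<and> strict_mono r \<and> (xs \<circ> r) \<longlonglongrightarrow> xbar
           \<and> xbar \<in> Kset J F \<eta> \<beta>"
proof -
  have A_sub: "A n \<subseteq> sublevel J \<beta> (cval J F \<infinity> + 1)" for n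
  proof -
    have "ereal (c + \<delta> n) \<le> cval J F \<infinity> + 1"
      using c c_le \<delta>(2)[of n] add_mono[of "ereal c" _ "ereal (\<delta> n)" 1] by simp
    then show ?thesis
      using A_max[of n] by (simp add: subset_sublevel_iff)
  qed
  obtain xs where xs_in: "\<forall>n. xs n \<in> A n"
    and lim: "(\<lambda>n. Jb J \<beta> (xs n)) \<longlonglongrightarrow> cval J F \<beta>"
      "(\<lambda>n. Jb J \<beta> (\<eta> \<beta> (xs n))) \<longlonglongrightarrow> cval J F \<beta>"
  proof -
    have "\<exists>xs. (\<forall>n. xs n \<in> A n) \<and> (\<lambda>n. Jb J \<beta> (xs n)) \<longlonglongrightarrow> ereal c
               \<and> (\<lambda>n. Jb J \<beta> (\<eta> \<beta> (xs n))) \<longlonglongrightarrow> ereal c"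
    proof (rule exists_sequence_tendsto_from_deformation[OF \<delta>(1)])
      show "ereal c \<le> (SUP y\<in>\<eta> \<beta> ` A n. Jb J \<beta> y)" for n
        using cval_le_SUP[OF eta1[OF A_in A_sub], where J = J and \<beta> = \<beta>] c by simp
      show "Jb J \<beta> x \<le> ereal (c + \<delta> n)" if "x \<in> A n" for n x
        using A_max[of n] that by (metis SUP_upper order_trans)
    qed (use eta2 A_sub in blast)
    with c that show ?thesis by auto
  qed
  moreover have "\<forall>n. xs n \<in> sublevel J \<beta> (cval J F \<infinity> + 1)"
    using xs_in A_sub by blast
  ultimately show ?thesis
    using PS unfolding PS_def by blast
qed

lemma closed_optimal_set_meets_Kset:
  assumes "optimal J F \<beta> (cval J F \<beta>) A" "closed A"
  shows "A \<inter> Kset J F \<eta> \<beta> \<noteq> {}"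
proof -
  from assms(1) c have "A \<in> F" "(SUP x\<in>A. Jb J \<beta> x) = ereal c"
    by (auto simp: optimal_def)
  then have "\<exists>xs r xbar. (\<forall>n::nat. xs n \<in> A) \<and> strict_mono r \<and> (xs \<circ> r) \<longlonglongrightarrow> xbar
      \<and> xbar \<in> Kset J F \<eta> \<beta>"
    by (intro Kset_point_from_minimax_sequence[where \<delta> = "\<lambda>_. 0"]) auto
  then obtain xs r xbar where "\<forall>n::nat. xs n \<in> A" "(xs \<circ> r) \<longlonglongrightarrow> xbar" "xbar \<in> Kset J F \<eta> \<beta>"
    by blast
  moreover have "xbar \<in> A"
    using closed_sequentially[OF \<open>closed A\<close>, of "xs \<circ> r"] calculation(1,2) by simp
  ultimately show ?thesis by blast
qed

lemma Kset_nonempty: "Kset J F \<eta> \<beta> \<noteq> {}"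
proof -
  have "\<exists>B\<in>F. (SUP x\<in>B. Jb J \<beta> x) < ereal (c + inverse (real (Suc n)))" for n
    using c by (simp add: cval_def INF_less_iff[symmetric])
  then obtain A where "\<And>n. A n \<in> F"
    "\<And>n. (SUP x\<in>A n. Jb J \<beta> x) < ereal (c + inverse (real (Suc n)))"
    by metis
  moreover have "inverse (real (Suc n)) \<le> 1" for n
    by (simp add: inverse_le_1_iff)
  ultimately obtain xs r xbar where "xbar \<in> Kset J F \<eta> \<beta>"
    using Kset_point_from_minimax_sequence[OF _ less_imp_le LIMSEQ_inverse_real_of_nat] by metis
  then show ?thesis by blast
qed

end

theorem theorem2p8:
  fixes J :: "real \<Rightarrow> 'a::metric_space \<Rightarrow> ereal"
    and F :: "'a set set"
    and \<eta> :: "ereal \<Rightarrow> 'a \<Rightarrow> 'a"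
  assumes lsc: "\<And>b. 0 < b \<Longrightarrow> lsc (J b)"
    and mono: "\<And>b1 b2 x. 0 < b1 \<Longrightarrow> b1 \<le> b2 \<Longrightarrow> J b1 x \<le> J b2 x"
    and c_real: "\<And>\<beta>. 0 < \<beta> \<Longrightarrow> \<bar>cval J F \<beta>\<bar> \<noteq> \<infinity>"
    and F1: "\<And>A. A \<in> F \<Longrightarrow> closed A"
    and F2': "\<And>A \<beta>. (\<forall>n. A n \<in> F) \<Longrightarrow> 0 < \<beta> \<Longrightarrow>
                 (\<forall>n. A n \<subseteq> sublevel J \<beta> (cval J F \<infinity> + 1)) \<Longrightarrow> limsup_sets A \<in> F"
    and eta_maps: "\<And>\<beta> x. 0 < \<beta> \<Longrightarrow> x \<in> sublevel J \<beta> (cval J F \<infinity> + 1) \<Longrightarrow>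
                 \<eta> \<beta> x \<in> sublevel J \<beta> (cval J F \<infinity> + 1)"
    and eta1: "\<And>\<beta> A. 0 < \<beta> \<Longrightarrow> A \<in> F \<Longrightarrow> A \<subseteq> sublevel J \<beta> (cval J F \<infinity> + 1) \<Longrightarrow>
                 \<eta> \<beta> ` A \<in> F"
    and eta2: "\<And>\<beta> x. 0 < \<beta> \<Longrightarrow> x \<in> sublevel J \<beta> (cval J F \<infinity> + 1) \<Longrightarrow>
                 Jb J \<beta> (\<eta> \<beta> x) \<le> Jb J \<beta> x"
    and PS: "\<And>\<beta>. 0 < \<beta> \<Longrightarrow> PS J F \<eta> \<beta>"
  shows "\<forall>\<beta>. 0 < \<beta> \<longrightarrow>
           (\<forall>A. optimal J F \<beta> (cval J F \<beta>) A \<longrightarrow> A \<inter> Kset J F \<eta> \<beta> \<noteq> {}) \<and>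
           Kset J F \<eta> \<beta> \<noteq> {}"
proof (intro allI impI conjI)
  fix \<beta> :: ereal
  assume "0 < \<beta>"
  then obtain c where c: "cval J F \<beta> = ereal c"
    using c_real[OF \<open>0 < \<beta>\<close>] by (cases "cval J F \<beta>") auto
  note hyps = c cval_le_cval_infinity[OF \<open>0 < \<beta>\<close>]
    eta1[OF \<open>0 < \<beta>\<close>] eta2[OF \<open>0 < \<beta>\<close>] PS[OF \<open>0 < \<beta>\<close>]
  show "A \<inter> Kset J F \<eta> \<beta> \<noteq> {}" if "optimal J F \<beta> (cval J F \<beta>) A" for A
    using closed_optimal_set_meets_Kset[OF hyps that] F1 that by (simp add: optimal_def)
  show "Kset J F \<eta> \<beta> \<noteq> {}"
    by (rule Kset_nonempty[OF hyps])
qed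

end
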